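(* Let $\mathcal{C}$ be a closed convex set with $\overline\Pi=\mathcal{C}\cap\Pi$ closed and convex. Let $S=(x_1,\dots,x_m)$ be drawn i.i.d. from $\mathcal{D}_{\mathcal{X}}$ and let $\widehat{\mathcal{D}}_{\mathcal{X}}$ be its empirical distribution. Define $$\mathcal{F}=\{x\mapsto\mathsf{B}_F(\pi(x)\parallel\pi_0(x)):\pi\in\overline\Pi\}\cup\{x\mapsto\mathsf{B}_F(\pi'(x)\parallel\pi(x)):\pi,\pi'\in\overline\Pi\},\qquad \epsilon_m=\sup_{f\in\mathcal{F}}\big|\mathbb{E}_{x\sim\mathcal{D}_{\mathcal{X}}}[f(x)]-\mathbb{E}_{x\sim\widehat{\mathcal{D}}_{\mathcal{X}}}[f(x)]\big|.$$ Let $\widehat\pi$ be a minimizer of $\pi\mapsto\mathbb{E}_{x\sim\mathcal{D}_{\mathcal{X}}}[\mathsf{B}_F(\pi(x)\parallel\pi_0(x))]$ over $\overline\Pi$ and $\widehat\pi_S$ a minimizer of $\pi\mapsto\mathbb{E}_{x\sim\widehat{\mathcal{D}}_{\mathcal{X}}}[\mathsf{B}_F(\pi(x)\parallel\pi_0(x))]$ over $\overline\Pi$. Assume $\pi^*\in\overline\Pi$. Then $$\mathbb{E}_{\mathcal{D}_{\mathcal{X}}}[\mathsf{B}_F(\pi^*(x)\parallel\widehat\pi_S(x))]\le\mathbb{E}_{\mathcal{D}_{\mathcal{X}}}[\mathsf{B}_F(\pi^*(x)\parallel\widehat\pi(x))]+6\epsilon_m+\mathbb{E}_{\mathcal{D}_{\mathcal{X}}}\big[\mathsf{B}_F(\pi^*(x)\parallel\pi_0(x))-\mathsf{B}_F(\widehat\pi(x)\parallel\pi_0(x))\big].$$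 In particular, if $\pi^*=\widehat\pi$, then $\mathbb{E}_{\mathcal{D}_{\mathcal{X}}}[\mathsf{B}_F(\pi^*(x)\parallel\widehat\pi_S(x))]\le\mathbb{E}_{\mathcal{D}_{\mathcal{X}}}[\mathsf{B}_F(\pi^*(x)\parallel\widehat\pi(x))]+6\epsilon_m$.
   Context: $\mathcal{X},\mathcal{Y}$ finite; models are maps $\pi\colon\mathcal{X}\to\Delta(\mathcal{Y})$; $\Pi\subseteq\Delta(\mathcal{Y})^{\mathcal{X}}$ closed and convex; $\pi_0$ a baseline model; $\pi^*$ a reference model; $\mathcal{D}_{\mathcal{X}}$ a full-support distribution on $\mathcal{X}$. $F$ is convex and differentiable on the interior of its domain (containing $\Delta(\mathcal{Y})$, relevant values lying where $\nabla F$ is defined), $\mathsf{B}_F(p\parallel q)=F(p)-F(q)-\langle\nabla F(q),p-q\rangle$. *)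

theory Defs
  imports "HOL-Analysis.Analysis" "HOL-Probability.Probability"
begin

definition prob_simplex :: "(real^'y::finite) set" where
  "prob_simplex = {p. (\<forall>y. 0 \<le> p $ y) \<and> (\<Sum>y\<in>UNIV. p $ y) = 1}"

definition models :: "((real^'y)^'x) set" where
  "models = {\<pi>. \<forall>x. \<pi> $ x \<in> prob_simplex}"

definition bregman :: "(real^'y \<Rightarrow> real) \<Rightarrow> real^'y \<Rightarrow> real^'y \<Rightarrow> real" where
  "bregman F p q = F p - F q - frechet_derivative F (at q) (p - q)"

end

theory Submission
  imports Defs
begin

(* Let a, s, h be the reference model, the empirical minimiser and the population minimiser.
   At s, the directional derivative of the empirical objective towards a is nonnegative; by the
   three-point identity of Bregman divergences this is the generalised Pythagorean inequality
   E_S B(a||s) + E_S B(s||pi0) <= E_S B(a||pi0). Moving its three terms from the empirical to the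
   population distribution costs at most 3 eps, and population optimality of h gives
   E B(h||pi0) <= E B(s||pi0). The term E B(a||h) >= 0 and the remaining 3 eps are slack. *)

lemma frechet_derivative_directional_quotient:
  fixes F :: "'a::real_normed_vector \<Rightarrow> real"
  assumes "F differentiable (at q)"
  shows "((\<lambda>t. (F (q + t *\<^sub>R v) - F q) / t) \<longlongrightarrow> frechet_derivative F (at q) v) (at_right 0)"
proof -
  let ?F' = "frechet_derivative F (at q)"
  have "((\<lambda>t::real. q + t *\<^sub>R v) has_derivative (\<lambda>t. t *\<^sub>R v)) (at 0 within {0<..})"
    by (auto intro!: derivative_eq_intros)
  then have "((\<lambda>t. F (q + t *\<^sub>R v)) has_derivative (\<lambda>t. ?F' (t *\<^sub>R v))) (at 0 within {0<..})"
    by (rule has_derivative_compose) (simp add: assms[unfolded frechet_derivative_works])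
  moreover have "(\<lambda>t. ?F' (t *\<^sub>R v)) = (*) (?F' v)"
    using linear_frechet_derivative[OF assms] by (auto simp: linear_scale)
  ultimately have "((\<lambda>t. F (q + t *\<^sub>R v)) has_field_derivative ?F' v) (at 0 within {0<..})"
    by (simp add: has_field_derivative_def)
  then show ?thesis
    by (simp add: has_field_derivative_iff)
qed

lemma convex_on_frechet_derivative_le:
  fixes F :: "'a::real_normed_vector \<Rightarrow> real"
  assumes "convex_on A F" "p \<in> A" "q \<in> A" "F differentiable (at q)"
  shows "frechet_derivative F (at q) (p - q) \<le> F p - F q"
proof (rule tendsto_upperbound[OF frechet_derivative_directional_quotient[OF assms(4)]])
  have quotient_le: "(F (q + t *\<^sub>R (p - q)) - F q) / t \<le> F p - F q" if "0 < t" "t < 1" for t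
  proof -
    have "F (q + t *\<^sub>R (p - q)) = F ((1 - t) *\<^sub>R q + t *\<^sub>R p)"
      by (simp add: algebra_simps)
    also have "\<dots> \<le> (1 - t) * F q + t * F p"
      using convex_onD[OF assms(1), of t q p] assms(2,3) that by simp
    finally show ?thesis
      using that by (simp add: divide_simps algebra_simps)
  qed
  show "\<forall>\<^sub>F t in at_right 0. (F (q + t *\<^sub>R (p - q)) - F q) / t \<le> F p - F q"
    by (rule eventually_at_rightI[of 0 1]) (auto intro: quotient_le)
qed simp

lemma bregman_nonneg:
  assumes "convex_on A F" "p \<in> A" "q \<in> A" "F differentiable (at q)"
  shows "0 \<le> bregman F p q"
  using convex_on_frechet_derivative_le[OF assms] by (simp add: bregman_def)

lemma bregman_three_point:
  assumes "F differentiable (at c)"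
  shows "bregman F a c = bregman F a b + bregman F b c
           + (frechet_derivative F (at b) (a - b) - frechet_derivative F (at c) (a - b))"
proof -
  have "frechet_derivative F (at c) ((a - b) + (b - c))
      = frechet_derivative F (at c) (a - b) + frechet_derivative F (at c) (b - c)"
    using linear_frechet_derivative[OF assms] by (rule linear_add)
  then show ?thesis by (simp add: bregman_def)
qed

lemma bregman_difference_quotient:
  assumes "F differentiable (at c)" "t \<noteq> 0"
  shows "(bregman F (q + t *\<^sub>R v) c - bregman F q c) / t
         = (F (q + t *\<^sub>R v) - F q) / t - frechet_derivative F (at c) v"
proof -
  have lin: "linear (frechet_derivative F (at c))"
    using linear_frechet_derivative[OF assms(1)] .
  have split: "q + t *\<^sub>R v - c = (q - c) + t *\<^sub>R v" by simp
  have "frechet_derivative F (at c) (q + t *\<^sub>R v - c)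
      = frechet_derivative F (at c) (q - c) + t * frechet_derivative F (at c) v"
    unfolding split linear_add[OF lin] linear_scale[OF lin] by simp
  then show ?thesis
    using assms(2) by (simp add: bregman_def field_simps)
qed

lemma expectation_finite_type:
  fixes M :: "'x::finite pmf" and f :: "'x \<Rightarrow> real"
  shows "measure_pmf.expectation M f = (\<Sum>x\<in>UNIV. f x * pmf M x)"
  by (rule integral_measure_pmf_real) auto

lemma convex_minimizer_directional_limit_nonneg:
  fixes G :: "'a::real_vector \<Rightarrow> real"
  assumes "convex P" "s \<in> P" "a \<in> P" "\<forall>\<pi>\<in>P. G s \<le> G \<pi>"
    and "((\<lambda>t. (G (s + t *\<^sub>R (a - s)) - G s) / t) \<longlongrightarrow> L) (at_right 0)"
  shows "0 \<le> L"
proof (rule tendsto_lowerbound[OF assms(5)])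
  have quotient_nonneg: "0 \<le> (G (s + t *\<^sub>R (a - s)) - G s) / t" if "0 < t" "t < 1" for t
  proof -
    have "s + t *\<^sub>R (a - s) = (1 - t) *\<^sub>R s + t *\<^sub>R a" by (simp add: algebra_simps)
    also have "\<dots> \<in> P" using assms(1-3) that by (intro convexD) auto
    finally show ?thesis using assms(4) that by simp
  qed
  show "\<forall>\<^sub>F t in at_right 0. 0 \<le> (G (s + t *\<^sub>R (a - s)) - G s) / t"
    by (rule eventually_at_rightI[of 0 1]) (auto intro: quotient_nonneg)
qed simp

abbreviation expected_bregman ::
    "(real^'y \<Rightarrow> real) \<Rightarrow> 'x pmf \<Rightarrow> (real^'y)^'x \<Rightarrow> (real^'y)^'x \<Rightarrow> real" where
  "expected_bregman F M \<pi> \<rho> \<equiv> measure_pmf.expectation M (\<lambda>x. bregman F (\<pi> $ x) (\<rho> $ x))"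

lemma expected_bregman_directional_limit:
  fixes M :: "'x::finite pmf"
  assumes "\<forall>x. F differentiable (at (s $ x))" "\<forall>x. F differentiable (at (c $ x))"
  shows "((\<lambda>t. (expected_bregman F M (s + t *\<^sub>R (a - s)) c - expected_bregman F M s c) / t)
          \<longlongrightarrow> measure_pmf.expectation M (\<lambda>x. frechet_derivative F (at (s $ x)) (a $ x - s $ x)
                                             - frechet_derivative F (at (c $ x)) (a $ x - s $ x)))
         (at_right 0)"
proof -
  define v where "v x = a $ x - s $ x" for x
  define Q where "Q t x = (F (s $ x + t *\<^sub>R v x) - F (s $ x)) / t
                            - frechet_derivative F (at (c $ x)) (v x)" for t x
  have limit: "((\<lambda>t. \<Sum>x\<in>UNIV. Q t x * pmf M x) \<longlongrightarrow> (\<Sum>x\<in>UNIV.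
          (frechet_derivative F (at (s $ x)) (v x) - frechet_derivative F (at (c $ x)) (v x)) * pmf M x))
        (at_right 0)"
    unfolding Q_def using assms
    by (intro tendsto_sum tendsto_mult tendsto_diff tendsto_const
          frechet_derivative_directional_quotient) auto
  have quotient_eq: "(\<Sum>x\<in>UNIV. Q t x * pmf M x)
      = (expected_bregman F M (s + t *\<^sub>R (a - s)) c - expected_bregman F M s c) / t" if "t > 0" for t
  proof -
    have "(\<Sum>x\<in>UNIV. Q t x * pmf M x)
        = (\<Sum>x\<in>UNIV. (bregman F (s $ x + t *\<^sub>R v x) (c $ x) - bregman F (s $ x) (c $ x)) / t * pmf M x)"
      using that assms(2) by (simp add: Q_def bregman_difference_quotient)
    also have "\<dots> = (expected_bregman F M (s + t *\<^sub>R (a - s)) c - expected_bregman F M s c) / t"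
      by (simp add: expectation_finite_type v_def sum_divide_distrib sum_subtractf[symmetric] left_diff_distrib)
    finally show ?thesis .
  qed
  have "\<forall>\<^sub>F t in at_right 0. (\<Sum>x\<in>UNIV. Q t x * pmf M x)
      = (expected_bregman F M (s + t *\<^sub>R (a - s)) c - expected_bregman F M s c) / t"
    using eventually_at_right_less by (rule eventually_mono) (rule quotient_eq)
  from tendsto_cong[OF this] limit show ?thesis
    by (simp add: expectation_finite_type v_def)
qed

lemma bregman_projection_pythagoras:
  fixes M :: "'x::finite pmf"
  assumes "convex P" "s \<in> P" "a \<in> P"
    and "\<forall>x. F differentiable (at (s $ x))" "\<forall>x. F differentiable (at (c $ x))"
    and "\<forall>\<pi>\<in>P. expected_bregman F M s c \<le> expected_bregman F M \<pi> c"
  shows "expected_bregman F M a s + expected_bregman F M s c \<le> expected_bregman F M a c"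
proof -
  let ?X = "\<lambda>x. frechet_derivative F (at (s $ x)) (a $ x - s $ x)
               - frechet_derivative F (at (c $ x)) (a $ x - s $ x)"
  have optimality: "0 \<le> measure_pmf.expectation M ?X"
    by (rule convex_minimizer_directional_limit_nonneg[where G = "\<lambda>\<pi>. expected_bregman F M \<pi> c",
          OF assms(1-3,6) expected_bregman_directional_limit[OF assms(4,5)]])
  have "bregman F (a $ x) (c $ x) = bregman F (a $ x) (s $ x) + bregman F (s $ x) (c $ x) + ?X x"
    for x using assms(5) by (blast intro: bregman_three_point)
  then have "expected_bregman F M a c
      = expected_bregman F M a s + expected_bregman F M s c + measure_pmf.expectation M ?X"
    by (simp add: expectation_finite_type sum.distrib distrib_right)
  with optimality show ?thesis by linarith
qed

lemma empirical_bregman_projection_excess_risk: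
  fixes D DS :: "'x::finite pmf"
  assumes F_convex: "convex_on A F" and F_diff: "\<forall>p\<in>interior A. F differentiable (at p)"
    and P_interior: "\<forall>\<pi>\<in>P. \<forall>x. \<pi> $ x \<in> interior A" and c_interior: "\<forall>x. c $ x \<in> interior A"
    and P_convex: "convex P" and a_in: "a \<in> P" and s_in: "s \<in> P" and h_in: "h \<in> P"
    and h_le_s: "expected_bregman F D h c \<le> expected_bregman F D s c"
    and s_min: "\<forall>\<pi>\<in>P. expected_bregman F DS s c \<le> expected_bregman F DS \<pi> c"
    and deviation: "\<And>\<pi> \<rho>. (\<pi>, \<rho>) \<in> {(a, c), (s, c), (a, s)} \<Longrightarrow>
          \<bar>expected_bregman F D \<pi> \<rho> - expected_bregman F DS \<pi> \<rho>\<bar> \<le> r"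
  shows "expected_bregman F D a s \<le> expected_bregman F D a h + 3 * r
           + measure_pmf.expectation D (\<lambda>x. bregman F (a $ x) (c $ x) - bregman F (h $ x) (c $ x))"
proof -
  have differentiable: "\<forall>x. F differentiable (at (\<pi> $ x))" if "\<pi> \<in> P" for \<pi>
    using that F_diff P_interior by blast
  have in_A: "\<pi> $ x \<in> A" if "\<pi> \<in> P" for \<pi> x
    using that P_interior interior_subset by blast
  have "expected_bregman F DS a s + expected_bregman F DS s c \<le> expected_bregman F DS a c"
    using P_convex s_in a_in differentiable[OF s_in] F_diff c_interior s_min
    by (intro bregman_projection_pythagoras) auto
  moreover have "0 \<le> expected_bregman F D a h"
    unfolding expectation_finite_type
    using a_in h_in differentiable[OF h_in]
    by (intro sum_nonneg mult_nonneg_nonneg pmf_nonneg bregman_nonneg[OF F_convex] in_A) auto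
  moreover have "measure_pmf.expectation D (\<lambda>x. bregman F (a $ x) (c $ x) - bregman F (h $ x) (c $ x))
      = expected_bregman F D a c - expected_bregman F D h c"
    by (simp add: expectation_finite_type sum_subtractf left_diff_distrib)
  ultimately show ?thesis
    using deviation[of a c] deviation[of s c] deviation[of a s] h_le_s by auto
qed

theorem theorem3:
  fixes F :: "real^'y \<Rightarrow> real"
    and dom :: "(real^'y) set"
    and Pimod C :: "((real^'y)^'x) set"
    and \<pi>0 \<pi>star \<pi>hat \<pi>hatS :: "(real^'y)^'x"
    and D :: "'x::finite pmf"
    and S :: "'x list"
  assumes dom_convex: "convex dom"
    and simplex_dom: "prob_simplex \<subseteq> dom"
    and F_convex: "convex_on dom F"
    and F_diff: "\<forall>p\<in>interior dom. F differentiable (at p)"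
    and Pi_models: "Pimod \<subseteq> models" and Pi_closed: "closed Pimod" and Pi_convex: "convex Pimod"
    and C_closed: "closed C" and C_convex: "convex C"
    and Pibar_closed: "closed (C \<inter> Pimod)" and Pibar_convex: "convex (C \<inter> Pimod)"
    and pi0_model: "\<pi>0 \<in> models"
    and pi0_int: "\<forall>x. \<pi>0 $ x \<in> interior dom"
    and Pibar_int: "\<forall>\<pi>\<in>C \<inter> Pimod. \<forall>x. \<pi> $ x \<in> interior dom"
    and D_full: "set_pmf D = UNIV"
    and S_nonempty: "S \<noteq> []"
    and pihat_in: "\<pi>hat \<in> C \<inter> Pimod"
    and pihat_min: "\<forall>\<pi>\<in>C \<inter> Pimod.
          measure_pmf.expectation D (\<lambda>x. bregman F (\<pi>hat $ x) (\<pi>0 $ x))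
          \<le> measure_pmf.expectation D (\<lambda>x. bregman F (\<pi> $ x) (\<pi>0 $ x))"
    and pihatS_in: "\<pi>hatS \<in> C \<inter> Pimod"
    and pihatS_min: "\<forall>\<pi>\<in>C \<inter> Pimod.
          measure_pmf.expectation (pmf_of_multiset (mset S)) (\<lambda>x. bregman F (\<pi>hatS $ x) (\<pi>0 $ x))
          \<le> measure_pmf.expectation (pmf_of_multiset (mset S)) (\<lambda>x. bregman F (\<pi> $ x) (\<pi>0 $ x))"
    and pistar_in: "\<pi>star \<in> C \<inter> Pimod"
  shows "let Pibar = C \<inter> Pimod;
             DS = pmf_of_multiset (mset S);
             \<F> = {(\<lambda>x. bregman F (\<pi> $ x) (\<pi>0 $ x)) | \<pi>. \<pi> \<in> Pibar}
                 \<union> {(\<lambda>x. bregman F (\<pi>' $ x) (\<pi> $ x)) | \<pi> \<pi>'. \<pi> \<in> Pibar \<and> \<pi>' \<in> Pibar};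
             \<epsilon> = (SUP f\<in>\<F>. ereal \<bar>measure_pmf.expectation D f - measure_pmf.expectation DS f\<bar>)
         in ereal (measure_pmf.expectation D (\<lambda>x. bregman F (\<pi>star $ x) (\<pi>hatS $ x)))
            \<le> ereal (measure_pmf.expectation D (\<lambda>x. bregman F (\<pi>star $ x) (\<pi>hat $ x)))
              + 6 * \<epsilon>
              + ereal (measure_pmf.expectation D
                  (\<lambda>x. bregman F (\<pi>star $ x) (\<pi>0 $ x) - bregman F (\<pi>hat $ x) (\<pi>0 $ x)))
            \<and> (\<pi>star = \<pi>hat \<longrightarrow>
                ereal (measure_pmf.expectation D (\<lambda>x. bregman F (\<pi>star $ x) (\<pi>hatS $ x)))
                \<le> ereal (measure_pmf.expectation D (\<lambda>x. bregman F (\<pi>star $ x) (\<pi>hat $ x)))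
                  + 6 * \<epsilon>)"
proof -
  define DS where "DS = pmf_of_multiset (mset S)"
  define \<F> where "\<F> = {(\<lambda>x. bregman F (\<pi> $ x) (\<pi>0 $ x)) | \<pi>. \<pi> \<in> C \<inter> Pimod}
      \<union> {(\<lambda>x. bregman F (\<pi>' $ x) (\<pi> $ x)) | \<pi> \<pi>'. \<pi> \<in> C \<inter> Pimod \<and> \<pi>' \<in> C \<inter> Pimod}"
  define \<epsilon> where "\<epsilon> = (SUP f\<in>\<F>. ereal \<bar>measure_pmf.expectation D f - measure_pmf.expectation DS f\<bar>)"
  have deviation_le: "ereal \<bar>measure_pmf.expectation D f - measure_pmf.expectation DS f\<bar> \<le> \<epsilon>"
    if "f \<in> \<F>" for f
    unfolding \<epsilon>_def using that by (rule SUP_upper)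
  have "(\<lambda>x. bregman F (\<pi>hat $ x) (\<pi>0 $ x)) \<in> \<F>"
    using pihat_in unfolding \<F>_def by blast
  from deviation_le[OF this] have "0 \<le> \<epsilon>"
    by (rule order_trans[rotated]) simp
  have excess_risk: "expected_bregman F D \<pi>star \<pi>hatS \<le> expected_bregman F D \<pi>star \<pi>hat + 3 * r
      + measure_pmf.expectation D (\<lambda>x. bregman F (\<pi>star $ x) (\<pi>0 $ x) - bregman F (\<pi>hat $ x) (\<pi>0 $ x))"
    if "\<epsilon> = ereal r" for r
  proof (rule empirical_bregman_projection_excess_risk[OF F_convex F_diff Pibar_int pi0_int Pibar_convex
        pistar_in pihatS_in pihat_in pihat_min[rule_format, OF pihatS_in] pihatS_min[folded DS_def]])
    fix \<pi> \<rho> assume "(\<pi>, \<rho>) \<in> {(\<pi>star, \<pi>0), (\<pi>hatS, \<pi>0), (\<pi>star, \<pi>hatS)}"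
    then have "(\<lambda>x. bregman F (\<pi> $ x) (\<rho> $ x)) \<in> \<F>"
      using pistar_in pihatS_in unfolding \<F>_def by blast
    from deviation_le[OF this] show "\<bar>expected_bregman F D \<pi> \<rho> - expected_bregman F DS \<pi> \<rho>\<bar> \<le> r"
      by (simp add: that)
  qed
  have "ereal (expected_bregman F D \<pi>star \<pi>hatS) \<le> ereal (expected_bregman F D \<pi>star \<pi>hat) + 6 * \<epsilon>
      + ereal (measure_pmf.expectation D
          (\<lambda>x. bregman F (\<pi>star $ x) (\<pi>0 $ x) - bregman F (\<pi>hat $ x) (\<pi>0 $ x)))"
    using \<open>0 \<le> \<epsilon>\<close> excess_risk by (cases \<epsilon>) auto
  then show ?thesis
    unfolding Let_def DS_def[symmetric] \<F>_def[symmetric] \<epsilon>_def[symmetric] by auto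
qed

end
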